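(* Let $G$ be a graph whose twin graph $G^*$ is isomorphic to a 5-cycle with one chord (so $G^*$ has two adjacent degree-3 vertices and three degree-2 vertices, two of which are adjacent to each other), where the two adjacent degree-2 vertices are of type (1) and the other three vertices are of type (1K). Then $D(G)\neq n(G)-2$.
   Context: All graphs are finite and simple; $n(G)=|V(G)|$; $N_G(u)$ is the neighborhood of $u$. A distinguishing coloring of a graph $G$ is a (not necessarily proper) vertex coloring such that the only automorphism of $G$ mapping every vertex to a vertex of the same color is the identity; the distinguishing number $D(G)$ is the minimum number of colors in a distinguishing coloring of $G$. Two distinct vertices $u,v$ are twins if $N_G(u)\setminus\{v\}=N_G(v)\setminus\{u\}$. The relation $u\equiv v$ iff $u=v$ or $u,v$ are twins is an equivalence relation; the class of $v$ is denoted $v^*$. The twin graph $G^*$ has the equivalence classes as vertices, distinct classes $u^*,v^*$ being adjacent iff $uv\in E(G)$. Each class induces a complete or an edgeless graph. A class $v^*$ is of type (1) if $|v^*|=1$, of type (K) if $|v^*|\ge 2$ and it induces a complete graph, and of type (N) if $|v^*|\ge2$ and it induces an edgeless graph; type (1K) means type (1) or (K), type (1N) means (1) or (N), and type (KN) means (K) or (N). *)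

theory Defs
  imports Main
begin

definition graph :: "'a set \<Rightarrow> ('a \<Rightarrow> 'a \<Rightarrow> bool) \<Rightarrow> bool" where
  "graph V E \<longleftrightarrow> finite V \<and> (\<forall>u v. E u v \<longrightarrow> u \<in> V \<and> v \<in> V)
     \<and> (\<forall>u v. E u v \<longrightarrow> E v u) \<and> (\<forall>u. \<not> E u u)"

definition nbhd :: "'a set \<Rightarrow> ('a \<Rightarrow> 'a \<Rightarrow> bool) \<Rightarrow> 'a \<Rightarrow> 'a set" where
  "nbhd V E u = {v \<in> V. E u v}"

definition twins :: "'a set \<Rightarrow> ('a \<Rightarrow> 'a \<Rightarrow> bool) \<Rightarrow> 'a \<Rightarrow> 'a \<Rightarrow> bool" where
  "twins V E u v \<longleftrightarrow> u \<in> V \<and> v \<in> V \<and> u \<noteq> v \<and> nbhd V E u - {v} = nbhd V E v - {u}"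

definition twin_class :: "'a set \<Rightarrow> ('a \<Rightarrow> 'a \<Rightarrow> bool) \<Rightarrow> 'a \<Rightarrow> 'a set" where
  "twin_class V E v = {u \<in> V. u = v \<or> twins V E u v}"

definition twin_vertices :: "'a set \<Rightarrow> ('a \<Rightarrow> 'a \<Rightarrow> bool) \<Rightarrow> 'a set set" where
  "twin_vertices V E = twin_class V E ` V"

definition twin_edges :: "'a set \<Rightarrow> ('a \<Rightarrow> 'a \<Rightarrow> bool) \<Rightarrow> 'a set \<Rightarrow> 'a set \<Rightarrow> bool" where
  "twin_edges V E X Y \<longleftrightarrow> X \<in> twin_vertices V E \<and> Y \<in> twin_vertices V E \<and> X \<noteq> Y
     \<and> (\<exists>u\<in>X. \<exists>v\<in>Y. E u v)"

definition graph_iso :: "'a set \<Rightarrow> ('a \<Rightarrow> 'a \<Rightarrow> bool) \<Rightarrow> 'b set \<Rightarrow> ('b \<Rightarrow> 'b \<Rightarrow> bool)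
    \<Rightarrow> ('a \<Rightarrow> 'b) \<Rightarrow> bool" where
  "graph_iso V E W F f \<longleftrightarrow> bij_betw f V W \<and> (\<forall>u\<in>V. \<forall>v\<in>V. E u v \<longleftrightarrow> F (f u) (f v))"

text \<open>The 5-cycle 0-1-2-3-4-0 with chord 0-2: degree-3 vertices 0,2 (adjacent);
  degree-2 vertices 1,3,4, where 3 and 4 are adjacent.\<close>
definition C5chord_vertices :: "nat set" where
  "C5chord_vertices = {0..<5}"

definition C5chord_edge :: "nat \<Rightarrow> nat \<Rightarrow> bool" where
  "C5chord_edge i j \<longleftrightarrow> {i, j} \<in> {{0,1}, {1,2}, {2,3}, {3,4}, {4,0}, {0,2}}"

definition type_1 :: "'a set \<Rightarrow> bool" where
  "type_1 X \<longleftrightarrow> card X = 1"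

definition type_K :: "('a \<Rightarrow> 'a \<Rightarrow> bool) \<Rightarrow> 'a set \<Rightarrow> bool" where
  "type_K E X \<longleftrightarrow> card X \<ge> 2 \<and> (\<forall>u\<in>X. \<forall>v\<in>X. u \<noteq> v \<longrightarrow> E u v)"

definition type_1K :: "('a \<Rightarrow> 'a \<Rightarrow> bool) \<Rightarrow> 'a set \<Rightarrow> bool" where
  "type_1K E X \<longleftrightarrow> type_1 X \<or> type_K E X"

definition automorphism :: "'a set \<Rightarrow> ('a \<Rightarrow> 'a \<Rightarrow> bool) \<Rightarrow> ('a \<Rightarrow> 'a) \<Rightarrow> bool" where
  "automorphism V E f \<longleftrightarrow> graph_iso V E V E f"

definition distinguishing :: "'a set \<Rightarrow> ('a \<Rightarrow> 'a \<Rightarrow> bool) \<Rightarrow> ('a \<Rightarrow> nat) \<Rightarrow> bool" where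
  "distinguishing V E c \<longleftrightarrow>
     (\<forall>f. automorphism V E f \<and> (\<forall>v\<in>V. c (f v) = c v) \<longrightarrow> (\<forall>v\<in>V. f v = v))"

definition dist_number :: "'a set \<Rightarrow> ('a \<Rightarrow> 'a \<Rightarrow> bool) \<Rightarrow> nat" where
  "dist_number V E = (LEAST k. \<exists>c :: 'a \<Rightarrow> nat. c ` V \<subseteq> {..<k} \<and> distinguishing V E c)"

end

theory Submission
  imports Defs
begin

(* Write \<phi> 3 = {v3} and \<phi> 4 = {v4}. Give v3 a colour of its own and colour each of the
   classes \<phi> 0, \<phi> 1, \<phi> 2 injectively: this needs max |\<phi> i| + 1 colours, fewer than
   n(G) - 2 = |\<phi> 0| + |\<phi> 1| + |\<phi> 2|. A colour-preserving automorphism fixes v3, hence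
   permutes N(v3) = {v4} \<union> \<phi> 2; it fixes v4 because every vertex of \<phi> 2 is adjacent to
   v3 and to all of \<phi> 0 \<union> \<phi> 1, so has larger degree than v4, whose neighbourhood is
   {v3} \<union> \<phi> 0. It then stabilises \<phi> 0 = N(v4) - v3, \<phi> 2 = N(v3) - v4 and the rest \<phi> 1,
   so it is the identity. *)

lemma twins_sym: "twins V E u v \<Longrightarrow> twins V E v u"
  by (auto simp: twins_def)

lemma twins_adjacent_iff:
  assumes "twins V E u u'" and "x \<in> V" and "x \<noteq> u" and "x \<noteq> u'"
  shows "E u x \<longleftrightarrow> E u' x"
  using assms unfolding twins_def nbhd_def by blast

lemma twins_trans:
  assumes g: "graph V E" and uv: "twins V E u v" and vw: "twins V E v w" and "u \<noteq> w"
  shows "twins V E u w"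
proof -
  have V: "u \<in> V" "v \<in> V" "w \<in> V" "u \<noteq> v" "v \<noteq> w" using uv vw by (auto simp: twins_def)
  have sym: "E x y \<longleftrightarrow> E y x" for x y using g by (auto simp: graph_def)
  have irr: "\<not> E x x" for x using g by (auto simp: graph_def)
  have same_nbhd: "E u x \<longleftrightarrow> E w x" if "x \<in> V" "x \<noteq> u" "x \<noteq> w" for x
  proof (cases "x = v")
    case True
    have "E u v \<longleftrightarrow> E w u"
      using sym twins_adjacent_iff[OF vw, of u] V \<open>u \<noteq> w\<close> by simp
    also have "\<dots> \<longleftrightarrow> E v w"
      using sym twins_adjacent_iff[OF uv, of w] V \<open>u \<noteq> w\<close> by simp
    finally show ?thesis using True sym by simp
  next
    case False
    then show ?thesis using that twins_adjacent_iff[OF uv] twins_adjacent_iff[OF vw] by simp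
  qed
  then show ?thesis using V \<open>u \<noteq> w\<close> irr unfolding twins_def nbhd_def by blast
qed

lemma twin_class_eq:
  assumes g: "graph V E" and u: "u \<in> twin_class V E v"
  shows "twin_class V E u = twin_class V E v"
proof -
  have step: "x \<in> twin_class V E b" if "x \<in> twin_class V E a" "a \<in> twin_class V E b" for x a b
    using that twins_trans[OF g, of x a b] unfolding twin_class_def by auto
  have "v \<in> twin_class V E u"
    using u twins_sym[of V E u v] unfolding twin_class_def twins_def by auto
  then show ?thesis using step u by blast
qed

lemma twin_vertex_eq_twin_class:
  assumes "graph V E" and "X \<in> twin_vertices V E" and "u \<in> X"
  shows "X = twin_class V E u"
proof -
  obtain v where "v \<in> V" "X = twin_class V E v" using assms(2) by (auto simp: twin_vertices_def)
  then show ?thesis using twin_class_eq[OF assms(1)] assms(3) by simp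
qed

lemma twins_if_same_twin_vertex:
  assumes "graph V E" and "X \<in> twin_vertices V E" and "u \<in> X" and "w \<in> X" and "u \<noteq> w"
  shows "twins V E u w"
  using twin_vertex_eq_twin_class[OF assms(1,2,4)] assms(3,5) by (simp add: twin_class_def)

lemma twin_vertex_adjacent:
  assumes g: "graph V E" and X: "X \<in> twin_vertices V E" and "u \<in> X" "u' \<in> X"
    and "E u' w" and "w \<notin> X"
  shows "E u w"
proof (cases "u = u'")
  case False
  have "w \<in> V" "w \<noteq> u" "w \<noteq> u'" using g assms by (auto simp: graph_def)
  then show ?thesis
    using twins_adjacent_iff[OF twins_if_same_twin_vertex[OF g X \<open>u \<in> X\<close> \<open>u' \<in> X\<close> False]]
      \<open>E u' w\<close> by blast
qed (use assms in simp)

lemma edge_iff_twin_edge: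
  assumes g: "graph V E" and X: "X \<in> twin_vertices V E" and Y: "Y \<in> twin_vertices V E"
    and "X \<noteq> Y" and u: "u \<in> X" and w: "w \<in> Y"
  shows "E u w \<longleftrightarrow> twin_edges V E X Y"
proof
  assume "twin_edges V E X Y"
  then obtain u' w' where "u' \<in> X" "w' \<in> Y" "E u' w'" by (auto simp: twin_edges_def)
  have disj: "x \<notin> X" if "x \<in> Y" for x
    using that twin_vertex_eq_twin_class[OF g X] twin_vertex_eq_twin_class[OF g Y] \<open>X \<noteq> Y\<close> by metis
  have sym: "E x y \<Longrightarrow> E y x" for x y using g by (auto simp: graph_def)
  have "E u w'" using twin_vertex_adjacent[OF g X u \<open>u' \<in> X\<close> \<open>E u' w'\<close>] disj \<open>w' \<in> Y\<close> by blast
  then have "E w u" using twin_vertex_adjacent[OF g Y w \<open>w' \<in> Y\<close>] disj u sym by blast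
  then show "E u w" using sym by blast
qed (use assms in \<open>auto simp: twin_edges_def\<close>)

lemma twin_vertex_subset: "X \<in> twin_vertices V E \<Longrightarrow> X \<subseteq> V"
  by (auto simp: twin_vertices_def twin_class_def)

lemma twin_vertex_nonempty: "X \<in> twin_vertices V E \<Longrightarrow> X \<noteq> {}"
  by (auto simp: twin_vertices_def twin_class_def)

lemma twin_graph_iso_vertex:
  "graph_iso W F (twin_vertices V E) (twin_edges V E) \<phi> \<Longrightarrow> i \<in> W \<Longrightarrow> \<phi> i \<in> twin_vertices V E"
  by (auto simp: graph_iso_def bij_betw_def)

lemma twin_graph_iso_cover:
  assumes "graph_iso W F (twin_vertices V E) (twin_edges V E) \<phi>"
  shows "V = (\<Union>i\<in>W. \<phi> i)"
proof
  have classes: "twin_vertices V E = \<phi> ` W" using assms by (auto simp: graph_iso_def bij_betw_def)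
  show "V \<subseteq> (\<Union>i\<in>W. \<phi> i)"
  proof
    fix v assume "v \<in> V"
    then have "v \<in> twin_class V E v" "twin_class V E v \<in> \<phi> ` W"
      using classes by (auto simp: twin_class_def twin_vertices_def)
    then show "v \<in> (\<Union>i\<in>W. \<phi> i)" by blast
  qed
  show "(\<Union>i\<in>W. \<phi> i) \<subseteq> V" using twin_vertex_subset classes by blast
qed

lemma twin_graph_iso_disjoint:
  assumes g: "graph V E" and iso: "graph_iso W F (twin_vertices V E) (twin_edges V E) \<phi>"
    and "i \<in> W" "j \<in> W" "i \<noteq> j"
  shows "\<phi> i \<inter> \<phi> j = {}"
proof -
  have "\<phi> i \<noteq> \<phi> j" using iso assms(3-5) by (auto simp: graph_iso_def bij_betw_def inj_on_def)
  then show ?thesis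
    using twin_vertex_eq_twin_class[OF g twin_graph_iso_vertex[OF iso]] assms(3,4) by blast
qed

lemma twin_graph_iso_edge_iff:
  assumes g: "graph V E" and iso: "graph_iso W F (twin_vertices V E) (twin_edges V E) \<phi>"
    and "i \<in> W" "j \<in> W" "i \<noteq> j" "u \<in> \<phi> i" "w \<in> \<phi> j"
  shows "E u w \<longleftrightarrow> F i j"
proof -
  have "\<phi> i \<noteq> \<phi> j" using twin_graph_iso_disjoint[OF g iso] assms(3-7) by blast
  then have "E u w \<longleftrightarrow> twin_edges V E (\<phi> i) (\<phi> j)"
    using edge_iff_twin_edge[OF g] twin_graph_iso_vertex[OF iso] assms(3,4,6,7) by blast
  then show ?thesis using iso assms(3,4) by (simp add: graph_iso_def)
qed

lemma card_twin_graph_iso: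
  assumes g: "graph V E" and iso: "graph_iso W F (twin_vertices V E) (twin_edges V E) \<phi>"
  shows "card V = (\<Sum>i\<in>W. card (\<phi> i))"
proof -
  have finV: "finite V" using g by (simp add: graph_def)
  have "finite (twin_vertices V E)" using finV by (simp add: twin_vertices_def)
  then have "finite W" using iso by (auto simp: graph_iso_def bij_betw_finite)
  moreover have "finite (\<phi> i)" if "i \<in> W" for i
    using that finV twin_vertex_subset[OF twin_graph_iso_vertex[OF iso]] finite_subset by blast
  ultimately show ?thesis
    using twin_graph_iso_cover[OF iso] twin_graph_iso_disjoint[OF g iso] by (simp add: card_UN_disjoint)
qed

lemma automorphism_image_nbhd:
  assumes f: "automorphism V E f" and "v \<in> V"
  shows "f ` nbhd V E v = nbhd V E (f v)"
proof -
  have bij: "bij_betw f V V" and hom: "\<And>u w. u \<in> V \<Longrightarrow> w \<in> V \<Longrightarrow> E u w \<longleftrightarrow> E (f u) (f w)"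
    using f by (auto simp: automorphism_def graph_iso_def)
  have "nbhd V E (f v) \<subseteq> f ` nbhd V E v"
  proof
    fix x assume "x \<in> nbhd V E (f v)"
    moreover obtain w where "w \<in> V" "x = f w"
      using bij calculation by (auto simp: nbhd_def bij_betw_def)
    ultimately show "x \<in> f ` nbhd V E v" using hom \<open>v \<in> V\<close> by (auto simp: nbhd_def)
  qed
  moreover have "f ` nbhd V E v \<subseteq> nbhd V E (f v)"
    using bij hom \<open>v \<in> V\<close> by (auto simp: nbhd_def bij_betw_def)
  ultimately show ?thesis by blast
qed

lemma card_nbhd_automorphism:
  assumes f: "automorphism V E f" and "v \<in> V"
  shows "card (nbhd V E (f v)) = card (nbhd V E v)"
proof -
  have "inj_on f (nbhd V E v)"
    using f by (auto simp: automorphism_def graph_iso_def bij_betw_def nbhd_def intro: inj_on_subset)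
  then show ?thesis using automorphism_image_nbhd[OF assms] card_image by metis
qed

lemma automorphism_fixpoint_nbhd:
  assumes "automorphism V E f" and "f a = a" and "a \<in> V" and "v \<in> V"
  shows "f v \<in> nbhd V E a \<longleftrightarrow> v \<in> nbhd V E a"
  using assms by (auto simp: automorphism_def graph_iso_def bij_betw_def nbhd_def)

lemma dist_number_le:
  assumes "c ` V \<subseteq> {..<k}" and "distinguishing V E c"
  shows "dist_number V E \<le> k"
  unfolding dist_number_def by (rule Least_le) (use assms in blast)

lemma distinguishing_if_parts_stable:
  assumes "V \<subseteq> \<Union>P" and "\<And>X. X \<in> P \<Longrightarrow> inj_on c X"
    and "\<And>f X v. automorphism V E f \<Longrightarrow> (\<forall>v\<in>V. c (f v) = c v) \<Longrightarrow> X \<in> P \<Longrightarrow> v \<in> X \<Longrightarrow> f v \<in> X"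
  shows "distinguishing V E c"
  unfolding distinguishing_def
proof (intro allI impI ballI)
  fix f v assume f: "automorphism V E f \<and> (\<forall>v\<in>V. c (f v) = c v)" and "v \<in> V"
  then obtain X where "X \<in> P" "v \<in> X" using assms(1) by blast
  then show "f v = v" using f assms(2,3) \<open>v \<in> V\<close> by (meson inj_onD)
qed

lemma injective_on_parts_coloring:
  fixes P :: "'a set set"
  assumes "\<And>X. X \<in> P \<Longrightarrow> finite X" and "pairwise disjnt P"
  obtains c :: "'a \<Rightarrow> nat" where "\<And>X. X \<in> P \<Longrightarrow> inj_on c X \<and> c ` X \<subseteq> {..<card X}"
proof -
  obtain h :: "'a set \<Rightarrow> 'a \<Rightarrow> nat" where h: "\<And>X. X \<in> P \<Longrightarrow> bij_betw (h X) X {0..<card X}"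
    using assms(1) ex_bij_betw_finite_nat by metis
  define c where "c v = h (THE X. X \<in> P \<and> v \<in> X) v" for v
  have "c v = h X v" if "X \<in> P" "v \<in> X" for X v
  proof -
    have "(THE X. X \<in> P \<and> v \<in> X) = X"
      using that assms(2) by (intro the_equality) (auto simp: pairwise_def disjnt_def)
    then show ?thesis by (simp add: c_def)
  qed
  then have "inj_on c X \<and> c ` X \<subseteq> {..<card X}" if "X \<in> P" for X
    using h[OF that] that by (auto simp: bij_betw_def inj_on_def)
  then show ?thesis using that by blast
qed

lemma C5chord_edge_iff:
  "C5chord_edge i j \<longleftrightarrow>
     (i, j) \<in> {(0,1), (1,0), (1,2), (2,1), (2,3), (3,2), (3,4), (4,3), (4,0), (0,4), (0,2), (2,0)}"
  unfolding C5chord_edge_def by (auto simp: doubleton_eq_iff)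

lemma C5chord_vertices_eq: "C5chord_vertices = {0, 1, 2, 3, 4}"
  by (auto simp: C5chord_vertices_def)

locale c5chord_twin_graph =
  fixes V :: "'a set" and E :: "'a \<Rightarrow> 'a \<Rightarrow> bool" and \<phi> :: "nat \<Rightarrow> 'a set"
  assumes graph: "graph V E"
    and iso: "graph_iso C5chord_vertices C5chord_edge (twin_vertices V E) (twin_edges V E) \<phi>"
    and singleton_3: "type_1 (\<phi> 3)" and singleton_4: "type_1 (\<phi> 4)"
begin

definition v3 :: 'a where "v3 = the_elem (\<phi> 3)"
definition v4 :: 'a where "v4 = the_elem (\<phi> 4)"

lemma class_3: "\<phi> 3 = {v3}" and class_4: "\<phi> 4 = {v4}"
  using singleton_3 singleton_4 by (auto simp: type_1_def v3_def v4_def card_1_singleton_iff)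

lemma finite_class: "i \<in> C5chord_vertices \<Longrightarrow> finite (\<phi> i)"
  using graph twin_vertex_subset[OF twin_graph_iso_vertex[OF iso]] finite_subset
  by (metis graph_def)

lemma card_class_pos: "i \<in> C5chord_vertices \<Longrightarrow> 0 < card (\<phi> i)"
  using finite_class twin_vertex_nonempty[OF twin_graph_iso_vertex[OF iso]] by (simp add: card_gt_0_iff)

lemma card_V: "card V = card (\<phi> 0) + card (\<phi> 1) + card (\<phi> 2) + 2"
  using card_twin_graph_iso[OF graph iso] by (simp add: C5chord_vertices_eq class_3 class_4)

lemma V_eq: "V = \<phi> 0 \<union> \<phi> 1 \<union> \<phi> 2 \<union> {v3, v4}"
  using twin_graph_iso_cover[OF iso] by (auto simp: C5chord_vertices_eq class_3 class_4)

lemma classes_disjoint: "i \<in> C5chord_vertices \<Longrightarrow> j \<in> C5chord_vertices \<Longrightarrow> i \<noteq> j \<Longrightarrow> \<phi> i \<inter> \<phi> j = {}"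
  using twin_graph_iso_disjoint[OF graph iso] .

lemma edge_iff:
  "i \<in> C5chord_vertices \<Longrightarrow> j \<in> C5chord_vertices \<Longrightarrow> i \<noteq> j \<Longrightarrow> u \<in> \<phi> i \<Longrightarrow> w \<in> \<phi> j
    \<Longrightarrow> E u w \<longleftrightarrow> C5chord_edge i j"
  using twin_graph_iso_edge_iff[OF graph iso] .

lemma special_vertices_distinct:
  "v3 \<noteq> v4" "v3 \<notin> \<phi> 0" "v3 \<notin> \<phi> 1" "v3 \<notin> \<phi> 2" "v4 \<notin> \<phi> 0" "v4 \<notin> \<phi> 1" "v4 \<notin> \<phi> 2"
  using classes_disjoint[of 3 4] classes_disjoint[of 3 0] classes_disjoint[of 3 1] classes_disjoint[of 3 2]
    classes_disjoint[of 4 0] classes_disjoint[of 4 1] classes_disjoint[of 4 2]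
  by (auto simp: C5chord_vertices_eq class_3 class_4)

lemma classes_012_disjoint: "\<phi> 0 \<inter> \<phi> 1 = {}" "\<phi> 0 \<inter> \<phi> 2 = {}" "\<phi> 1 \<inter> \<phi> 2 = {}"
  using classes_disjoint by (simp_all add: C5chord_vertices_eq)

lemma adjacent_v3_iff: "w \<in> V \<Longrightarrow> E v3 w \<longleftrightarrow> w \<in> \<phi> 2 \<or> w = v4"
  using V_eq edge_iff[of 3 0 v3 w] edge_iff[of 3 1 v3 w] edge_iff[of 3 2 v3 w] edge_iff[of 3 4 v3 w]
    special_vertices_distinct classes_012_disjoint graph
  by (auto simp: C5chord_edge_iff C5chord_vertices_eq class_3 class_4 graph_def)

lemma adjacent_v4_iff: "w \<in> V \<Longrightarrow> E v4 w \<longleftrightarrow> w \<in> \<phi> 0 \<or> w = v3"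
  using V_eq edge_iff[of 4 0 v4 w] edge_iff[of 4 1 v4 w] edge_iff[of 4 2 v4 w] edge_iff[of 4 3 v4 w]
    special_vertices_distinct classes_012_disjoint graph
  by (auto simp: C5chord_edge_iff C5chord_vertices_eq class_3 class_4 graph_def)

lemma nbhd_v3: "nbhd V E v3 = insert v4 (\<phi> 2)"
  using adjacent_v3_iff V_eq by (auto simp: nbhd_def)

lemma nbhd_v4: "nbhd V E v4 = insert v3 (\<phi> 0)"
  using adjacent_v4_iff V_eq by (auto simp: nbhd_def)

lemma class_2_nbhd: "y \<in> \<phi> 2 \<Longrightarrow> insert v3 (\<phi> 0 \<union> \<phi> 1) \<subseteq> nbhd V E y"
  using edge_iff[of 2 0 y] edge_iff[of 2 1 y] adjacent_v3_iff[of y] V_eq graph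
  by (auto simp: nbhd_def C5chord_edge_iff C5chord_vertices_eq graph_def)

lemma automorphism_fixing_v3_fixes_v4:
  assumes f: "automorphism V E f" and "f v3 = v3"
  shows "f v4 = v4"
proof (rule ccontr)
  assume "f v4 \<noteq> v4"
  have "v3 \<in> V" "v4 \<in> V" using V_eq by auto
  then have "f v4 \<in> \<phi> 2"
    using automorphism_fixpoint_nbhd[OF f \<open>f v3 = v3\<close>] nbhd_v3 \<open>f v4 \<noteq> v4\<close> by auto
  have "card (\<phi> 0) + card (\<phi> 1) + 1 = card (insert v3 (\<phi> 0 \<union> \<phi> 1))"
    using finite_class special_vertices_distinct classes_012_disjoint
    by (simp add: C5chord_vertices_eq card_Un_disjoint)
  also have "\<dots> \<le> card (nbhd V E (f v4))"
    using class_2_nbhd[OF \<open>f v4 \<in> \<phi> 2\<close>] graph by (intro card_mono) (auto simp: graph_def nbhd_def)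
  also have "\<dots> = card (\<phi> 0) + 1"
    using card_nbhd_automorphism[OF f \<open>v4 \<in> V\<close>] finite_class special_vertices_distinct
    by (simp add: nbhd_v4 C5chord_vertices_eq)
  finally show False using card_class_pos[of 1] by (simp add: C5chord_vertices_eq)
qed

definition parts :: "'a set set" where "parts = {\<phi> 0, \<phi> 1, \<phi> 2, {v3}, {v4}}"

lemma automorphism_fixing_v3_stabilises_parts:
  assumes f: "automorphism V E f" and "f v3 = v3" and "X \<in> parts" and "v \<in> X"
  shows "f v \<in> X"
proof -
  have "f v4 = v4" using automorphism_fixing_v3_fixes_v4[OF f \<open>f v3 = v3\<close>] .
  have "v \<in> V" using \<open>X \<in> parts\<close> \<open>v \<in> X\<close> V_eq by (auto simp: parts_def)
  have special: "v3 \<in> V" "v4 \<in> V" using V_eq by auto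
  have fV: "f v \<in> V" and inj: "inj_on f V"
    using f \<open>v \<in> V\<close> by (auto simp: automorphism_def graph_iso_def bij_betw_def)
  have "f v = v3 \<longleftrightarrow> v = v3" "f v = v4 \<longleftrightarrow> v = v4"
    using inj_on_eq_iff[OF inj \<open>v \<in> V\<close> special(1)] inj_on_eq_iff[OF inj \<open>v \<in> V\<close> special(2)]
      \<open>f v3 = v3\<close> \<open>f v4 = v4\<close> by auto
  moreover have "f v \<in> nbhd V E v3 \<longleftrightarrow> v \<in> nbhd V E v3" "f v \<in> nbhd V E v4 \<longleftrightarrow> v \<in> nbhd V E v4"
    using automorphism_fixpoint_nbhd[OF f] \<open>f v3 = v3\<close> \<open>f v4 = v4\<close> special \<open>v \<in> V\<close> by auto
  moreover have "w \<in> \<phi> 0 \<longleftrightarrow> w \<in> nbhd V E v4 \<and> w \<noteq> v3"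
    and "w \<in> \<phi> 2 \<longleftrightarrow> w \<in> nbhd V E v3 \<and> w \<noteq> v4"
    and "w \<in> \<phi> 1 \<longleftrightarrow> w \<notin> nbhd V E v3 \<and> w \<notin> nbhd V E v4 \<and> w \<noteq> v3 \<and> w \<noteq> v4"
    if "w \<in> V" for w
    using that V_eq special_vertices_distinct classes_012_disjoint
    unfolding nbhd_v3 nbhd_v4 by blast+
  ultimately show ?thesis
    using \<open>X \<in> parts\<close> \<open>v \<in> X\<close> \<open>v \<in> V\<close> fV unfolding parts_def by blast
qed

definition max_class :: nat where
  "max_class = max (card (\<phi> 0)) (max (card (\<phi> 1)) (card (\<phi> 2)))"

lemma parts_partition: "V = \<Union>parts" "pairwise disjnt parts" "\<And>X. X \<in> parts \<Longrightarrow> finite X"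
  using V_eq special_vertices_distinct classes_012_disjoint finite_class
  by (auto simp: parts_def pairwise_def disjnt_def C5chord_vertices_eq)

lemma card_part_le_max_class: "X \<in> parts \<Longrightarrow> card X \<le> max_class"
  using card_class_pos[of 0] by (auto simp: parts_def max_class_def C5chord_vertices_eq)

lemma distinguishing_coloring:
  obtains c where "c ` V \<subseteq> {..<max_class + 1}" and "distinguishing V E c"
proof -
  obtain c where c: "\<And>X. X \<in> parts \<Longrightarrow> inj_on c X \<and> c ` X \<subseteq> {..<card X}"
    using injective_on_parts_coloring parts_partition(2,3) by metis
  define col where "col = c(v3 := max_class)"
  have below: "col v < max_class" if v: "v \<in> V" "v \<noteq> v3" for v
  proof -
    obtain X where "X \<in> parts" "v \<in> X" using v(1) parts_partition(1) by blast
    then show ?thesis using c card_part_le_max_class v(2) by (fastforce simp: col_def)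
  qed
  have "col ` V \<subseteq> {..<max_class + 1}"
    using below by (force simp: col_def)
  moreover have "distinguishing V E col"
  proof (rule distinguishing_if_parts_stable)
    show "V \<subseteq> \<Union>parts" using parts_partition(1) by simp
    show "inj_on col X" if "X \<in> parts" for X
      using c[OF that] that special_vertices_distinct
      by (cases "X = {v3}") (auto simp: col_def parts_def inj_on_def)
    fix f X v assume f: "automorphism V E f" and same: "\<forall>v\<in>V. col (f v) = col v"
      and "X \<in> parts" "v \<in> X"
    have "v3 \<in> V" using V_eq by simp
    then have "f v3 \<in> V" using f by (auto simp: automorphism_def graph_iso_def bij_betw_def)
    then have "f v3 = v3" using below same \<open>v3 \<in> V\<close> by (metis fun_upd_same col_def less_irrefl)
    then show "f v \<in> X" using automorphism_fixing_v3_stabilises_parts f \<open>X \<in> parts\<close> \<open>v \<in> X\<close> by blast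
  qed
  ultimately show ?thesis using that by blast
qed

lemma dist_number_lt: "dist_number V E < card V - 2"
proof -
  obtain c where "c ` V \<subseteq> {..<max_class + 1}" and "distinguishing V E c"
    using distinguishing_coloring .
  then have "dist_number V E \<le> max_class + 1" by (rule dist_number_le)
  also have "\<dots> < card V - 2"
    using card_class_pos[of 0] card_class_pos[of 1] card_class_pos[of 2]
    by (simp add: card_V max_class_def C5chord_vertices_eq)
  finally show ?thesis .
qed

end

theorem lemma4p8:
  fixes V :: "'a set" and E :: "'a \<Rightarrow> 'a \<Rightarrow> bool" and \<phi> :: "nat \<Rightarrow> 'a set"
  assumes "graph V E"
    and "graph_iso C5chord_vertices C5chord_edge (twin_vertices V E) (twin_edges V E) \<phi>"
    and "type_1 (\<phi> 3)" and "type_1 (\<phi> 4)"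
    and "type_1K E (\<phi> 0)" and "type_1K E (\<phi> 1)" and "type_1K E (\<phi> 2)"
  shows "dist_number V E \<noteq> card V - 2"
proof -
  interpret c5chord_twin_graph V E \<phi>
    using assms(1-4) by unfold_locales
  show ?thesis using dist_number_lt by simp
qed

end
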